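(* Let $\lambda\supseteq\mu$ be partitions and $j\in\mathbb Z$, and suppose $\mu$ has an addable node in column $j$. If there exists a cover-expansive Dyck tiling of $\lambda\setminus\mu$, then $\lambda$ has either an addable node or a removable node in column $j$.
   Context: Partitions are identified with Young diagrams $\{(a,b)\in\mathbb N^2:b\le\lambda_a\}$; nodes are elements of $\mathbb N^2$; $(a,b)$ has height $a+b$ and lies in column $b-a$ (smaller column = further left). An addable node of $\lambda$ is a node not in $\lambda$ whose addition gives a partition; a removable node is a node of $\lambda$ whose removal gives a partition. $\mathtt{NE}(\mathfrak n)=\mathfrak n+(0,1)$, $\mathtt{SW}(\mathfrak n)=\mathfrak n-(0,1)$, $\mathtt{SE}(\mathfrak n)=\mathfrak n-(1,0)$. A tile is a finite nonempty set of nodes orderable $\mathfrak n_1,\dots,\mathfrak n_r$ with $\mathfrak n_{i+1}\in\{\mathtt{NE}(\mathfrak n_i),\mathtt{SE}(\mathfrak n_i)\}$; start = leftmost node, end = rightmost node; Dyck tile if start and end both attain the maximal height of its nodes. A Dyck tiling of $\lambda\setminus\mu$ is a partition of it into Dyck tiles. It is cover-expansive if whenever $\mathfrak a,\mathtt{SE}(\mathfrak a)\in\lambda\setminus\mu$, the tile of $\mathtt{SE}(\mathfrak a)$ starts weakly left of the start of the tile of $\mathfrak a$, and whenever $\mathfrak a,\mathtt{SW}(\mathfrak a)\in\lambda\setminus\mu$, the tile of $\mathtt{SW}(\mathfrak a)$ ends weakly right of the end of the tile of $\mathfrak a$. *)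

theory Defs
  imports Main
begin

text \<open>Nodes are pairs (a,b) of integers; a genuine node of N^2 has a >= 1 and b >= 1.
  Partitions are identified with their Young diagrams.\<close>

type_synonym node = "int \<times> int"

definition is_node :: "node \<Rightarrow> bool" where
  "is_node n \<longleftrightarrow> fst n \<ge> 1 \<and> snd n \<ge> 1"

text \<open>A Young diagram: a finite set of nodes of the form {(a,b). b <= lambda_a}
  with lambda weakly decreasing, i.e. a finite down-closed set of nodes.\<close>
definition young_diagram :: "node set \<Rightarrow> bool" where
  "young_diagram L \<longleftrightarrow> finite L \<and> (\<forall>n\<in>L. is_node n) \<and>
     (\<forall>a b a' b'. (a, b) \<in> L \<and> 1 \<le> a' \<and> a' \<le> a \<and> 1 \<le> b' \<and> b' \<le> b \<longrightarrow> (a', b') \<in> L)"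

definition height :: "node \<Rightarrow> int" where
  "height n = fst n + snd n"

definition col :: "node \<Rightarrow> int" where
  "col n = snd n - fst n"

definition addable :: "node set \<Rightarrow> node \<Rightarrow> bool" where
  "addable L n \<longleftrightarrow> is_node n \<and> n \<notin> L \<and> young_diagram (insert n L)"

definition removable :: "node set \<Rightarrow> node \<Rightarrow> bool" where
  "removable L n \<longleftrightarrow> n \<in> L \<and> young_diagram (L - {n})"

definition NE :: "node \<Rightarrow> node" where "NE n = (fst n, snd n + 1)"
definition SW :: "node \<Rightarrow> node" where "SW n = (fst n, snd n - 1)"
definition SE :: "node \<Rightarrow> node" where "SE n = (fst n - 1, snd n)"

definition is_tile :: "node set \<Rightarrow> bool" where
  "is_tile T \<longleftrightarrow> finite T \<and> T \<noteq> {} \<and> (\<forall>n\<in>T. is_node n) \<and>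
     (\<exists>ns. set ns = T \<and> distinct ns \<and>
        (\<forall>i. i + 1 < length ns \<longrightarrow> ns ! (i + 1) \<in> {NE (ns ! i), SE (ns ! i)}))"

definition tile_start :: "node set \<Rightarrow> node" where
  "tile_start T = (THE n. n \<in> T \<and> (\<forall>m\<in>T. col n \<le> col m))"

definition tile_end :: "node set \<Rightarrow> node" where
  "tile_end T = (THE n. n \<in> T \<and> (\<forall>m\<in>T. col m \<le> col n))"

definition dyck_tile :: "node set \<Rightarrow> bool" where
  "dyck_tile T \<longleftrightarrow> is_tile T \<and>
     height (tile_start T) = Max (height ` T) \<and> height (tile_end T) = Max (height ` T)"

definition dyck_tiling :: "node set \<Rightarrow> node set \<Rightarrow> node set set \<Rightarrow> bool" where
  "dyck_tiling L M P \<longleftrightarrow> (\<forall>T\<in>P. dyck_tile T) \<and>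
     (\<forall>T\<in>P. \<forall>T'\<in>P. T \<noteq> T' \<longrightarrow> T \<inter> T' = {}) \<and> \<Union>P = L - M"

definition tile_of :: "node set set \<Rightarrow> node \<Rightarrow> node set" where
  "tile_of P n = (THE T. T \<in> P \<and> n \<in> T)"

definition cover_expansive :: "node set \<Rightarrow> node set \<Rightarrow> node set set \<Rightarrow> bool" where
  "cover_expansive L M P \<longleftrightarrow>
     (\<forall>a. a \<in> L - M \<and> SE a \<in> L - M \<longrightarrow>
        col (tile_start (tile_of P (SE a))) \<le> col (tile_start (tile_of P a))) \<and>
     (\<forall>a. a \<in> L - M \<and> SW a \<in> L - M \<longrightarrow>
        col (tile_end (tile_of P (SW a))) \<ge> col (tile_end (tile_of P a)))"

end

theory Submission
  imports Defs
begin

text \<open>Let \<open>(a, b)\<close> be addable for \<open>M\<close> and climb the diagonal \<open>diag s = (a + s, b + s)\<close>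
  of its column inside \<open>L\<close> up to its last node \<open>diag t\<close>. If both nodes
  \<open>left t = (a + t + 1, b + t)\<close> and \<open>right t = (a + t, b + t + 1)\<close> lie in \<open>L\<close>, then
  \<open>diag (t + 1)\<close> is addable for \<open>L\<close>; if neither does, \<open>diag t\<close> is removable.
  The tiling excludes the mixed cases. Cover-expansiveness forces the tile of \<open>diag s\<close> to
  reach further left whenever \<open>left s \<in> L\<close>, and its left neighbour cannot be
  \<open>left (s - 1)\<close>, which belongs to the tile of \<open>diag (s - 1)\<close>; so by induction
  \<open>left s\<close> lies in the tile of \<open>diag s\<close>, and symmetrically for \<open>right s\<close>. If
  \<open>right t \<in> L\<close> but \<open>left t \<notin> L\<close>, the tile of \<open>diag t\<close> therefore starts at
  \<open>diag t\<close> yet contains the higher node \<open>right t\<close>, contradicting the Dyck condition.\<close>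

lemma col_NE [simp]: "col (NE x) = col x + 1"
  by (simp add: col_def NE_def)

lemma col_SE [simp]: "col (SE x) = col x + 1"
  by (simp add: col_def SE_def)

lemma tile_enum:
  assumes "is_tile T"
  obtains ns where "set ns = T"
    "\<And>i. i < length ns \<Longrightarrow> col (ns ! i) = col (ns ! 0) + int i"
    "\<And>i. Suc i < length ns \<Longrightarrow> ns ! Suc i \<in> {NE (ns ! i), SE (ns ! i)}"
proof -
  obtain ns where set: "set ns = T"
    and step: "\<And>i. Suc i < length ns \<Longrightarrow> ns ! Suc i \<in> {NE (ns ! i), SE (ns ! i)}"
    using assms unfolding is_tile_def by auto
  have "col (ns ! i) = col (ns ! 0) + int i" if "i < length ns" for i
    using that by (induction i) (use step in fastforce)+
  then show thesis
    using that set step by blast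
qed

lemma tile_col_inj:
  assumes "is_tile T"
  shows "inj_on col T"
proof (rule inj_onI)
  fix x y assume "x \<in> T" "y \<in> T" "col x = col y"
  obtain ns where "set ns = T" and col: "\<And>i. i < length ns \<Longrightarrow> col (ns ! i) = col (ns ! 0) + int i"
    using tile_enum[OF assms] by metis
  with \<open>x \<in> T\<close> \<open>y \<in> T\<close> \<open>col x = col y\<close> show "x = y"
    by (metis in_set_conv_nth of_nat_eq_iff add_left_cancel)
qed

lemma tile_col_interval:
  assumes "is_tile T" "x \<in> T" "y \<in> T" "col x \<le> c" "c \<le> col y"
  shows "\<exists>z\<in>T. col z = c"
proof -
  obtain ns where set: "set ns = T" and col: "\<And>i. i < length ns \<Longrightarrow> col (ns ! i) = col (ns ! 0) + int i"
    using tile_enum[OF assms(1)] by metis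
  obtain i k where "i < length ns" "x = ns ! i" "k < length ns" "y = ns ! k"
    using assms(2,3) set by (metis in_set_conv_nth)
  with assms(4,5) col have "nat (c - col (ns ! 0)) < length ns" "col (ns ! nat (c - col (ns ! 0))) = c"
    by force+
  then show ?thesis
    using set by (metis nth_mem)
qed

lemma tile_step:
  assumes "is_tile T" "x \<in> T" "y \<in> T" "col y = col x + 1"
  shows "y = NE x \<or> y = SE x"
proof -
  obtain ns where set: "set ns = T"
    and col: "\<And>i. i < length ns \<Longrightarrow> col (ns ! i) = col (ns ! 0) + int i"
    and step: "\<And>i. Suc i < length ns \<Longrightarrow> ns ! Suc i \<in> {NE (ns ! i), SE (ns ! i)}"
    using tile_enum[OF assms(1)] by metis
  obtain i k where "i < length ns" "x = ns ! i" "k < length ns" "y = ns ! k"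
    using assms(2,3) set by (metis in_set_conv_nth)
  moreover from this have "k = Suc i"
    using col assms(4) by force
  ultimately show ?thesis
    using step by blast
qed

lemma tile_start:
  assumes "is_tile T"
  shows tile_start_in: "tile_start T \<in> T"
    and tile_start_le: "m \<in> T \<Longrightarrow> col (tile_start T) \<le> col m"
proof -
  have "finite (col ` T)" "col ` T \<noteq> {}"
    using assms unfolding is_tile_def by auto
  then obtain n where n: "n \<in> T" "col n = Min (col ` T)"
    using Min_in by (metis imageE)
  then have min: "\<forall>m\<in>T. col n \<le> col m"
    using \<open>finite (col ` T)\<close> by simp
  have "tile_start T = n"
    unfolding tile_start_def
  proof (rule the_equality)
    fix n' assume n': "n' \<in> T \<and> (\<forall>m\<in>T. col n' \<le> col m)"
    then have "col n' = col n"
      using n min by force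
    then show "n' = n"
      using n' n(1) inj_onD[OF tile_col_inj[OF assms]] by blast
  qed (use n min in blast)
  with n min show "tile_start T \<in> T" "m \<in> T \<Longrightarrow> col (tile_start T) \<le> col m"
    by auto
qed

lemma tile_end:
  assumes "is_tile T"
  shows tile_end_in: "tile_end T \<in> T"
    and tile_end_ge: "m \<in> T \<Longrightarrow> col m \<le> col (tile_end T)"
proof -
  have "finite (col ` T)" "col ` T \<noteq> {}"
    using assms unfolding is_tile_def by auto
  then obtain n where n: "n \<in> T" "col n = Max (col ` T)"
    using Max_in by (metis imageE)
  then have max: "\<forall>m\<in>T. col m \<le> col n"
    using \<open>finite (col ` T)\<close> by simp
  have "tile_end T = n"
    unfolding tile_end_def
  proof (rule the_equality)
    fix n' assume n': "n' \<in> T \<and> (\<forall>m\<in>T. col m \<le> col n')"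
    then have "col n' = col n"
      using n max by force
    then show "n' = n"
      using n' n(1) inj_onD[OF tile_col_inj[OF assms]] by blast
  qed (use n max in blast)
  with n max show "tile_end T \<in> T" "m \<in> T \<Longrightarrow> col m \<le> col (tile_end T)"
    by auto
qed

lemma tile_pred:
  assumes "is_tile T" "x \<in> T" "col (tile_start T) < col x"
  obtains y where "y \<in> T" "x = NE y \<or> x = SE y"
proof -
  obtain y where y: "y \<in> T" "col y = col x - 1"
    using tile_col_interval[OF assms(1) tile_start_in[OF assms(1)] assms(2), of "col x - 1"] assms(3)
    by auto
  then have "x = NE y \<or> x = SE y"
    using tile_step[OF assms(1) y(1) assms(2)] by simp
  with y show thesis
    using that by blast
qed

lemma tile_succ:
  assumes "is_tile T" "x \<in> T" "col x < col (tile_end T)"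
  obtains y where "y \<in> T" "y = NE x \<or> y = SE x"
proof -
  obtain y where y: "y \<in> T" "col y = col x + 1"
    using tile_col_interval[OF assms(1) assms(2) tile_end_in[OF assms(1)], of "col x + 1"] assms(3)
    by auto
  then show thesis
    using tile_step[OF assms(1) assms(2) y(1)] that by blast
qed

lemma dyck_tile_height_le:
  assumes "dyck_tile T" "x \<in> T"
  shows dyck_tile_height_le_start: "height x \<le> height (tile_start T)"
    and dyck_tile_height_le_end: "height x \<le> height (tile_end T)"
  using assms Max_ge[of "height ` T"] unfolding dyck_tile_def is_tile_def by auto

lemma young_diagram_downward:
  "young_diagram L \<Longrightarrow> (x, y) \<in> L \<Longrightarrow> 1 \<le> x' \<Longrightarrow> x' \<le> x \<Longrightarrow> 1 \<le> y' \<Longrightarrow> y' \<le> y \<Longrightarrow> (x', y') \<in> L"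
  unfolding young_diagram_def by blast

lemma addable_below_in:
  assumes "addable M (x, y)" "1 \<le> x'" "x' \<le> x" "1 \<le> y'" "y' \<le> y" "(x', y') \<noteq> (x, y)"
  shows "(x', y') \<in> M"
  using assms young_diagram_downward[of "insert (x, y) M" x y x' y'] unfolding addable_def by auto

lemma addable_if_corner:
  assumes "young_diagram L" "(x, y) \<notin> L" "1 \<le> x" "1 \<le> y"
    and "x = 1 \<or> (x - 1, y) \<in> L" "y = 1 \<or> (x, y - 1) \<in> L"
  shows "addable L (x, y)"
proof -
  have closed: "(x', y') \<in> insert (x, y) L"
    if "(p, q) \<in> insert (x, y) L" "1 \<le> x'" "x' \<le> p" "1 \<le> y'" "y' \<le> q" for p q x' y'
  proof (cases "(p, q) = (x, y) \<and> (x', y') \<noteq> (x, y)")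
    case True
    then have "x' \<le> x" "y' \<le> y"
      using that by auto
    from True that consider "x' \<le> x - 1" | "y' \<le> y - 1"
      by fastforce
    then show ?thesis
    proof cases
      case 1
      then have "(x - 1, y) \<in> L"
        using assms(5) that(2) by auto
      then show ?thesis
        using young_diagram_downward[OF assms(1) _ that(2) 1 that(4) \<open>y' \<le> y\<close>] by simp
    next
      case 2
      then have "(x, y - 1) \<in> L"
        using assms(6) that(4) by auto
      then show ?thesis
        using young_diagram_downward[OF assms(1) _ that(2) \<open>x' \<le> x\<close> that(4) 2] by simp
    qed
  next
    case False
    then show ?thesis
      using that young_diagram_downward[OF assms(1), of p q x' y'] by auto
  qed
  have "finite L" "\<forall>n\<in>L. is_node n"
    using assms(1) unfolding young_diagram_def by auto
  then have "young_diagram (insert (x, y) L)"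
    unfolding young_diagram_def
  proof (intro conjI allI impI)
    show "\<forall>n\<in>insert (x, y) L. is_node n"
      using \<open>\<forall>n\<in>L. is_node n\<close> assms(3,4) by (simp add: is_node_def)
    show "finite (insert (x, y) L)"
      using \<open>finite L\<close> by simp
    fix p q x' y' assume "(p, q) \<in> insert (x, y) L \<and> 1 \<le> x' \<and> x' \<le> p \<and> 1 \<le> y' \<and> y' \<le> q"
    then show "(x', y') \<in> insert (x, y) L"
      using closed by blast
  qed
  then show ?thesis
    using assms(2-4) unfolding addable_def is_node_def by simp
qed

lemma removable_if_corner:
  assumes "young_diagram L" "(x, y) \<in> L" "(x + 1, y) \<notin> L" "(x, y + 1) \<notin> L"
  shows "removable L (x, y)"
proof -
  have closed: "(x', y') \<in> L - {(x, y)}"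
    if "(p, q) \<in> L - {(x, y)}" "1 \<le> x'" "x' \<le> p" "1 \<le> y'" "y' \<le> q" for p q x' y'
  proof
    show "(x', y') \<in> L"
      using that young_diagram_downward[OF assms(1), of p q x' y'] by auto
    show "(x', y') \<notin> {(x, y)}"
    proof
      assume "(x', y') \<in> {(x, y)}"
      with that have "x + 1 \<le> p \<or> y + 1 \<le> q"
        by auto
      then have "(x + 1, y) \<in> L \<or> (x, y + 1) \<in> L"
        using that \<open>(x', y') \<in> {(x, y)}\<close> young_diagram_downward[OF assms(1), of p q "x + 1" y]
          young_diagram_downward[OF assms(1), of p q x "y + 1"] by auto
      with assms(3,4) show False
        by blast
    qed
  qed
  have "finite L" "\<forall>n\<in>L. is_node n"
    using assms(1) unfolding young_diagram_def by auto
  then have "young_diagram (L - {(x, y)})"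
    unfolding young_diagram_def
  proof (intro conjI allI impI)
    fix p q x' y' assume "(p, q) \<in> L - {(x, y)} \<and> 1 \<le> x' \<and> x' \<le> p \<and> 1 \<le> y' \<and> y' \<le> q"
    then show "(x', y') \<in> L - {(x, y)}"
      using closed by blast
  qed auto
  then show ?thesis
    using assms(2) unfolding removable_def by simp
qed

lemma diagonal_exit:
  assumes "finite L" "(a, b) \<in> L"
  obtains t :: nat where "(a + int t, b + int t) \<in> L" "(a + int t + 1, b + int t + 1) \<notin> L"
proof -
  have "\<exists>t::nat. (a + int t, b + int t) \<in> L \<and> (a + int t + 1, b + int t + 1) \<notin> L"
  proof (rule ccontr)
    assume no_exit: "\<not> ?thesis"
    have "(a + int t, b + int t) \<in> L" for t
    proof (induction t)
      case 0
      then show ?case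
        using assms(2) by simp
    next
      case (Suc t)
      then have "(a + int t + 1, b + int t + 1) \<in> L"
        using no_exit by blast
      then show ?case
        by (simp add: ac_simps)
    qed
    then have "range (\<lambda>t::nat. (a + int t, b + int t)) \<subseteq> L"
      by auto
    moreover have "inj (\<lambda>t::nat. (a + int t, b + int t))"
      by (auto intro: injI)
    then have "infinite (range (\<lambda>t::nat. (a + int t, b + int t)))"
      using finite_imageD infinite_UNIV_nat by blast
    ultimately show False
      using assms(1) finite_subset by blast
  qed
  then show thesis
    using that by blast
qed

lemma tile_of:
  assumes "dyck_tiling L M P" "x \<in> L - M"
  shows tile_of_in_tiling: "tile_of P x \<in> P"
    and tile_of_mem: "x \<in> tile_of P x"
proof -
  obtain T where T: "T \<in> P" "x \<in> T"
    using assms unfolding dyck_tiling_def by blast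
  have "tile_of P x = T"
    unfolding tile_of_def using assms T unfolding dyck_tiling_def by (intro the_equality) blast+
  with T show "tile_of P x \<in> P" "x \<in> tile_of P x"
    by auto
qed

lemma dyck_tile_tile_of:
  assumes "dyck_tiling L M P" "x \<in> L - M"
  shows "dyck_tile (tile_of P x)"
  using assms(1) tile_of_in_tiling[OF assms] unfolding dyck_tiling_def by blast

lemma is_tile_tile_of: "dyck_tiling L M P \<Longrightarrow> x \<in> L - M \<Longrightarrow> is_tile (tile_of P x)"
  using dyck_tile_tile_of unfolding dyck_tile_def by blast

lemma tile_of_subset:
  assumes "dyck_tiling L M P" "x \<in> L - M"
  shows "tile_of P x \<subseteq> L - M"
  using assms(1) tile_of_in_tiling[OF assms] unfolding dyck_tiling_def by blast

lemma tile_of_col_eq: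
  assumes "dyck_tiling L M P" "x \<in> L - M" "y \<in> L - M"
    and "z \<in> tile_of P x" "z \<in> tile_of P y" "col x = col y"
  shows "x = y"
proof -
  have "tile_of P x = tile_of P y"
    using assms(1,4,5) tile_of_in_tiling[OF assms(1,2)] tile_of_in_tiling[OF assms(1,3)]
    unfolding dyck_tiling_def by blast
  then show ?thesis
    using assms(6) tile_of_mem[OF assms(1,2)] tile_of_mem[OF assms(1,3)]
      inj_onD[OF tile_col_inj[OF is_tile_tile_of[OF assms(1,2)]]] by metis
qed

section \<open>The diagonal through an addable node\<close>

locale addable_diagonal =
  fixes L M :: "node set" and P :: "node set set" and a b :: int
  assumes young_L: "young_diagram L" and young_M: "young_diagram M" and M_subset: "M \<subseteq> L"
    and tiling: "dyck_tiling L M P" and expansive: "cover_expansive L M P"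
    and addable_ab: "addable M (a, b)"
begin

abbreviation diag :: "nat \<Rightarrow> node" where "diag s \<equiv> (a + int s, b + int s)"
abbreviation left :: "nat \<Rightarrow> node" where "left s \<equiv> (a + int s + 1, b + int s)"
abbreviation right :: "nat \<Rightarrow> node" where "right s \<equiv> (a + int s, b + int s + 1)"

lemma corner_pos: "1 \<le> a" "1 \<le> b"
  using addable_ab by (auto simp: addable_def is_node_def)

lemma skew_downward:
  assumes "(x, y) \<in> L" "a \<le> x'" "x' \<le> x" "b \<le> y'" "y' \<le> y"
  shows "(x', y') \<in> L - M"
proof -
  have "(x', y') \<notin> M"
    using assms young_diagram_downward[OF young_M, of x' y' a b] corner_pos addable_ab
    unfolding addable_def by auto
  then show ?thesis
    using assms corner_pos young_diagram_downward[OF young_L] by auto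
qed

lemma SW_corner_notin: "(a, b - 1) \<notin> L - M"
  using young_L corner_pos addable_below_in[OF addable_ab, of a "b - 1"]
  unfolding young_diagram_def is_node_def by fastforce

lemma SE_corner_notin: "(a - 1, b) \<notin> L - M"
  using young_L corner_pos addable_below_in[OF addable_ab, of "a - 1" b]
  unfolding young_diagram_def is_node_def by fastforce

lemma diag_tiles_disjoint:
  "diag s \<in> L - M \<Longrightarrow> diag s' \<in> L - M \<Longrightarrow> z \<in> tile_of P (diag s) \<Longrightarrow> z \<in> tile_of P (diag s') \<Longrightarrow> s = s'"
  using tile_of_col_eq[OF tiling] by (fastforce simp: col_def)

lemma diag_start_left:
  assumes "left s \<in> L"
  shows "col (tile_start (tile_of P (diag s))) < col (diag s)"
proof -
  have "left s \<in> L - M" "diag s \<in> L - M" "SE (left s) = diag s"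
    using skew_downward[OF assms] by (auto simp: SE_def)
  then have "col (tile_start (tile_of P (diag s))) \<le> col (tile_start (tile_of P (left s)))"
    using expansive unfolding cover_expansive_def by metis
  also have "\<dots> \<le> col (left s)"
    using tile_start_le[OF is_tile_tile_of] tile_of_mem tiling \<open>left s \<in> L - M\<close> by blast
  finally show ?thesis
    by (simp add: col_def)
qed

lemma diag_end_right:
  assumes "right s \<in> L"
  shows "col (diag s) < col (tile_end (tile_of P (diag s)))"
proof -
  have "right s \<in> L - M" "diag s \<in> L - M" "SW (right s) = diag s"
    using skew_downward[OF assms] by (auto simp: SW_def)
  have "col (right s) \<le> col (tile_end (tile_of P (right s)))"
    using tile_end_ge[OF is_tile_tile_of] tile_of_mem tiling \<open>right s \<in> L - M\<close> by blast
  also have "\<dots> \<le> col (tile_end (tile_of P (diag s)))"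
    using expansive \<open>right s \<in> L - M\<close> \<open>diag s \<in> L - M\<close> \<open>SW (right s) = diag s\<close>
    unfolding cover_expansive_def by metis
  finally show ?thesis
    by (simp add: col_def)
qed

text \<open>The only candidates for the neighbour of \<open>diag s\<close> in its tile to the left are
  \<open>left s\<close> and \<open>left (s - 1)\<close>; the latter is taken by the tile of
  \<open>diag (s - 1)\<close> (and does not exist in \<open>L - M\<close> when \<open>s = 0\<close>).
  The same holds on the right with \<open>right\<close>.\<close>

lemma diag_pred_in_tile:
  assumes "diag s \<in> L" and lower: "\<forall>s'<s. left s' \<in> tile_of P (diag s')"
    and "col (tile_start (tile_of P (diag s))) < col (diag s)"
  shows "left s \<in> tile_of P (diag s)"
proof -
  have d: "diag s \<in> L - M"
    using skew_downward[OF assms(1)] by simp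
  obtain y where y: "y \<in> tile_of P (diag s)" "diag s = NE y \<or> diag s = SE y"
    using tile_pred[OF is_tile_tile_of[OF tiling d] tile_of_mem[OF tiling d] assms(3)] by metis
  have "diag s \<noteq> NE y"
  proof
    assume "diag s = NE y"
    then have y_eq: "y = (a + int s, b + int s - 1)"
      by (cases y) (simp add: NE_def)
    show False
    proof (cases s)
      case 0
      then show False
        using y(1) y_eq SW_corner_notin tile_of_subset[OF tiling d] by auto
    next
      case (Suc s')
      then have "y = left s'" "diag s' \<in> L - M"
        using y_eq skew_downward[OF assms(1), of "a + int s'" "b + int s'"] by auto
      moreover have "left s' \<in> tile_of P (diag s')"
        using lower Suc by simp
      ultimately have "s = s'"
        using diag_tiles_disjoint[OF d _ y(1)] by blast
      then show False
        using Suc by simp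
    qed
  qed
  then have "y = left s"
    using y(2) by (cases y) (simp add: SE_def)
  then show ?thesis
    using y(1) by simp
qed

lemma diag_succ_in_tile:
  assumes "diag s \<in> L" and lower: "\<forall>s'<s. right s' \<in> tile_of P (diag s')"
    and "col (diag s) < col (tile_end (tile_of P (diag s)))"
  shows "right s \<in> tile_of P (diag s)"
proof -
  have d: "diag s \<in> L - M"
    using skew_downward[OF assms(1)] by simp
  obtain y where y: "y \<in> tile_of P (diag s)" "y = NE (diag s) \<or> y = SE (diag s)"
    using tile_succ[OF is_tile_tile_of[OF tiling d] tile_of_mem[OF tiling d] assms(3)] by metis
  have "y \<noteq> SE (diag s)"
  proof
    assume "y = SE (diag s)"
    then have y_eq: "y = (a + int s - 1, b + int s)"
      by (simp add: SE_def)
    show False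
    proof (cases s)
      case 0
      then show False
        using y(1) y_eq SE_corner_notin tile_of_subset[OF tiling d] by auto
    next
      case (Suc s')
      then have "y = right s'" "diag s' \<in> L - M"
        using y_eq skew_downward[OF assms(1), of "a + int s'" "b + int s'"] by auto
      moreover have "right s' \<in> tile_of P (diag s')"
        using lower Suc by simp
      ultimately have "s = s'"
        using diag_tiles_disjoint[OF d _ y(1)] by blast
      then show False
        using Suc by simp
    qed
  qed
  then show ?thesis
    using y by (simp add: NE_def)
qed

lemma left_in_tile: "left s \<in> L \<Longrightarrow> left s \<in> tile_of P (diag s)"
proof (induction s rule: less_induct)
  case (less s)
  have "\<forall>s'<s. left s' \<in> L"
    using skew_downward[OF less.prems] by auto
  moreover have "diag s \<in> L"
    using skew_downward[OF less.prems] by simp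
  ultimately show ?case
    using less diag_pred_in_tile diag_start_left by blast
qed

lemma right_in_tile: "right s \<in> L \<Longrightarrow> right s \<in> tile_of P (diag s)"
proof (induction s rule: less_induct)
  case (less s)
  have "\<forall>s'<s. right s' \<in> L"
    using skew_downward[OF less.prems] by auto
  moreover have "diag s \<in> L"
    using skew_downward[OF less.prems] by simp
  ultimately show ?case
    using less diag_succ_in_tile diag_end_right by blast
qed

lemma tile_start_diag:
  assumes "diag s \<in> L" "left s \<notin> L"
  shows "tile_start (tile_of P (diag s)) = diag s"
proof -
  have d: "diag s \<in> L - M"
    using skew_downward[OF assms(1)] by simp
  have "\<forall>s'<s. left s' \<in> tile_of P (diag s')"
    using left_in_tile skew_downward[OF assms(1)] by auto
  then have "\<not> col (tile_start (tile_of P (diag s))) < col (diag s)"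
    using diag_pred_in_tile[OF assms(1)] tile_of_subset[OF tiling d] assms(2) by blast
  then show ?thesis
    using tile_start_le tile_start_in tile_col_inj is_tile_tile_of[OF tiling d] tile_of_mem[OF tiling d]
    by (metis inj_onD order_antisym not_less)
qed

lemma tile_end_diag:
  assumes "diag s \<in> L" "right s \<notin> L"
  shows "tile_end (tile_of P (diag s)) = diag s"
proof -
  have d: "diag s \<in> L - M"
    using skew_downward[OF assms(1)] by simp
  have "\<forall>s'<s. right s' \<in> tile_of P (diag s')"
    using right_in_tile skew_downward[OF assms(1)] by auto
  then have "\<not> col (diag s) < col (tile_end (tile_of P (diag s)))"
    using diag_succ_in_tile[OF assms(1)] tile_of_subset[OF tiling d] assms(2) by blast
  then show ?thesis
    using tile_end_ge tile_end_in tile_col_inj is_tile_tile_of[OF tiling d] tile_of_mem[OF tiling d]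
    by (metis inj_onD order_antisym not_less)
qed

lemma right_imp_left:
  assumes "diag t \<in> L" "right t \<in> L"
  shows "left t \<in> L"
proof (rule ccontr)
  assume "left t \<notin> L"
  have "diag t \<in> L - M"
    using skew_downward[OF assms(1)] by simp
  then have "height (right t) \<le> height (tile_start (tile_of P (diag t)))"
    using dyck_tile_height_le_start[OF dyck_tile_tile_of[OF tiling] right_in_tile[OF assms(2)]] by blast
  then show False
    using tile_start_diag[OF assms(1) \<open>left t \<notin> L\<close>] by (simp add: height_def)
qed

lemma left_imp_right:
  assumes "diag t \<in> L" "left t \<in> L"
  shows "right t \<in> L"
proof (rule ccontr)
  assume "right t \<notin> L"
  have "diag t \<in> L - M"
    using skew_downward[OF assms(1)] by simp
  then have "height (left t) \<le> height (tile_end (tile_of P (diag t)))"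
    using dyck_tile_height_le_end[OF dyck_tile_tile_of[OF tiling] left_in_tile[OF assms(2)]] by blast
  then show False
    using tile_end_diag[OF assms(1) \<open>right t \<notin> L\<close>] by (simp add: height_def)
qed

lemma column_has_corner: "\<exists>n. (addable L n \<or> removable L n) \<and> col n = b - a"
proof (cases "(a, b) \<in> L")
  case False
  have "a = 1 \<or> (a - 1, b) \<in> L" "b = 1 \<or> (a, b - 1) \<in> L"
    using addable_below_in[OF addable_ab, of "a - 1" b] addable_below_in[OF addable_ab, of a "b - 1"]
      corner_pos M_subset by force+
  then have "addable L (a, b)"
    using addable_if_corner[OF young_L False corner_pos] by blast
  then show ?thesis
    by (intro exI[of _ "(a, b)"]) (simp add: col_def)
next
  case True
  have "finite L"
    using young_L unfolding young_diagram_def by simp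
  then obtain t where "diag t \<in> L" "(a + int t + 1, b + int t + 1) \<notin> L"
    using diagonal_exit True by blast
  then consider "left t \<in> L" "right t \<in> L" | "left t \<notin> L" "right t \<notin> L"
    using right_imp_left left_imp_right by blast
  then show ?thesis
  proof cases
    case 1
    then have "addable L (a + int t + 1, b + int t + 1)"
      using \<open>(a + int t + 1, b + int t + 1) \<notin> L\<close> corner_pos
      by (intro addable_if_corner[OF young_L]) (auto simp: add_ac)
    then show ?thesis
      by (intro exI[of _ "(a + int t + 1, b + int t + 1)"]) (simp add: col_def)
  next
    case 2
    then have "removable L (diag t)"
      using \<open>diag t \<in> L\<close> by (intro removable_if_corner[OF young_L]) (auto simp: add_ac)
    then show ?thesis
      by (intro exI[of _ "diag t"]) (simp add: col_def)
  qed
qed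

end

theorem lemma4p5:
  fixes L M :: "node set" and j :: int
  assumes "young_diagram L" and "young_diagram M" and "M \<subseteq> L"
    and "\<exists>n. addable M n \<and> col n = j"
    and "\<exists>P. dyck_tiling L M P \<and> cover_expansive L M P"
  shows "\<exists>n. (addable L n \<or> removable L n) \<and> col n = j"
proof -
  obtain a b where "addable M (a, b)" "j = b - a"
    using assms(4) by (auto simp: col_def)
  moreover obtain P where "dyck_tiling L M P" "cover_expansive L M P"
    using assms(5) by blast
  ultimately interpret addable_diagonal L M P a b
    using assms(1-3) by unfold_locales
  show ?thesis
    using column_has_corner \<open>j = b - a\<close> by simp
qed

end
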